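(* Let $\alpha,\beta\in\mathbb{Z}[\rho]$ be nonzero with $N(\alpha)\ge 7$. Then $EJ_{\alpha\beta}$ is an $N(\beta)$-fold cover of $EJ_\alpha$.
   Context: $\rho=(1+\sqrt{-3})/2$, $\mathbb{Z}[\rho]=\{x+y\rho: x,y\in\mathbb{Z}\}$ with norm $N(x+y\rho)=x^2+xy+y^2$ (multiplicative). For $N(\gamma)\ge 7$, $EJ_\gamma$ is the Cayley graph on the additive group of $\mathbb{Z}[\rho]/(\gamma)$ with connection set $\{\pm[1]_\gamma,\pm[\rho]_\gamma,\pm[\rho^2]_\gamma\}$, where $[\xi]_\gamma$ is the residue class modulo $(\gamma)$. A graph $\Gamma_1$ is a cover of $\Gamma_2$ if there is a surjection $\phi:V(\Gamma_1)\to V(\Gamma_2)$ whose restriction to the neighbourhood of each $u\in V(\Gamma_1)$ is a bijection onto the neighbourhood of $\phi(u)$; it is a $k$-fold cover if moreover $|\phi^{-1}(v)|=k$ for all $v$. *)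

theory Defs
  imports Main
begin

text \<open>Eisenstein integers x + y*rho, rho = (1 + sqrt(-3))/2, represented as pairs (x, y).
  Since rho^2 = rho - 1, (a + b rho)(c + d rho) = (ac - bd) + (ad + bc + bd) rho.\<close>

type_synonym eis = "int \<times> int"

definition eadd :: "eis \<Rightarrow> eis \<Rightarrow> eis" where
  "eadd z w = (fst z + fst w, snd z + snd w)"

definition eneg :: "eis \<Rightarrow> eis" where
  "eneg z = (- fst z, - snd z)"

definition emult :: "eis \<Rightarrow> eis \<Rightarrow> eis" where
  "emult z w = (fst z * fst w - snd z * snd w,
                fst z * snd w + snd z * fst w + snd z * snd w)"

definition eone :: eis where "eone = (1, 0)"
definition erho :: eis where "erho = (0, 1)"
definition ezero :: eis where "ezero = (0, 0)"

definition enorm :: "eis \<Rightarrow> int" where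
  "enorm z = fst z ^ 2 + fst z * snd z + snd z ^ 2"

definition econg :: "eis \<Rightarrow> eis \<Rightarrow> eis \<Rightarrow> bool" where
  "econg \<gamma> a b \<longleftrightarrow> (\<exists>k. eadd a (eneg b) = emult \<gamma> k)"

definition erel :: "eis \<Rightarrow> (eis \<times> eis) set" where
  "erel \<gamma> = {(a, b). econg \<gamma> a b}"

definition eclass :: "eis \<Rightarrow> eis \<Rightarrow> eis set" where
  "eclass \<gamma> a = erel \<gamma> `` {a}"

definition eresidues :: "eis \<Rightarrow> eis set set" where
  "eresidues \<gamma> = UNIV // erel \<gamma>"

definition EJ_conn :: "eis set" where
  "EJ_conn = {eone, eneg eone, erho, eneg erho, emult erho erho, eneg (emult erho erho)}"

definition EJ_adj :: "eis \<Rightarrow> eis set \<Rightarrow> eis set \<Rightarrow> bool" where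
  "EJ_adj \<gamma> U W \<longleftrightarrow> U \<in> eresidues \<gamma> \<and> W \<in> eresidues \<gamma> \<and>
     (\<exists>u\<in>U. \<exists>s\<in>EJ_conn. W = eclass \<gamma> (eadd u s))"

definition is_cover_map ::
  "'a set \<Rightarrow> ('a \<Rightarrow> 'a \<Rightarrow> bool) \<Rightarrow> 'b set \<Rightarrow> ('b \<Rightarrow> 'b \<Rightarrow> bool) \<Rightarrow> ('a \<Rightarrow> 'b) \<Rightarrow> bool" where
  "is_cover_map V1 E1 V2 E2 \<phi> \<longleftrightarrow>
     \<phi> ` V1 = V2 \<and>
     (\<forall>u\<in>V1. bij_betw \<phi> {v\<in>V1. E1 u v} {w\<in>V2. E2 (\<phi> u) w})"

definition is_kfold_cover ::
  "'a set \<Rightarrow> ('a \<Rightarrow> 'a \<Rightarrow> bool) \<Rightarrow> 'b set \<Rightarrow> ('b \<Rightarrow> 'b \<Rightarrow> bool) \<Rightarrow> nat \<Rightarrow> bool" where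
  "is_kfold_cover V1 E1 V2 E2 k \<longleftrightarrow>
     (\<exists>\<phi>. is_cover_map V1 E1 V2 E2 \<phi> \<and> (\<forall>v\<in>V2. card {u\<in>V1. \<phi> u = v} = k))"

end

theory Submission
  imports Defs
begin

text \<open>The projection \<open>Z[\<rho>]/(\<alpha>\<beta>) \<rightarrow> Z[\<rho>]/(\<alpha>)\<close> is a group homomorphism mapping the
  connection set of \<open>EJ\<^sub>\<alpha>\<^sub>\<beta>\<close> onto that of \<open>EJ\<^sub>\<alpha>\<close>; it is a cover as soon as the six units stay
  pairwise incongruent modulo \<open>\<alpha>\<close>, which holds because their differences have norm at most 4 while
  nonzero multiples of \<open>\<alpha>\<close> have norm at least \<open>N(\<alpha>) \<ge> 7\<close>. Its fibres are cosets of
  \<open>\<alpha>Z[\<rho>]/(\<alpha>\<beta>) \<cong> Z[\<rho>]/(\<beta>)\<close>, which has \<open>N(\<beta>)\<close> elements: the ideal \<open>(\<beta>)\<close> is a sublattice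
  of \<open>\<int>\<^sup>2\<close> with a triangular basis whose determinant is \<open>N(\<beta>)\<close>.\<close>

lemma enorm_mult: "enorm (emult z w) = enorm z * enorm w"
  by (cases z; cases w) (simp add: enorm_def emult_def power2_eq_square algebra_simps)

lemma enorm_pos:
  assumes "z \<noteq> ezero"
  shows "enorm z > 0"
proof -
  obtain a b where z: "z = (a, b)" by (cases z)
  have "4 * enorm z = (2*a + b)^2 + 3 * b^2"
    by (simp add: z enorm_def power2_eq_square algebra_simps)
  moreover have "(2*a + b)^2 + 3 * b^2 > 0"
    using assms z by (cases "b = 0") (auto simp: ezero_def intro: add_nonneg_pos)
  ultimately show ?thesis by simp
qed

lemma enorm_le_enorm_mult:
  assumes "k \<noteq> ezero"
  shows "enorm \<delta> \<le> enorm (emult \<delta> k)"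
proof -
  have "enorm \<delta> \<ge> 0"
    using enorm_pos[of \<delta>] by (cases "\<delta> = ezero") (auto simp: ezero_def enorm_def)
  then show ?thesis
    using enorm_pos[OF assms] by (simp add: enorm_mult mult_le_cancel_left1)
qed

lemma emult_assoc: "emult (emult a b) c = emult a (emult b c)"
  by (simp add: emult_def algebra_simps)

lemma emult_diff:
  "(fst (emult a x) - fst (emult a y), snd (emult a x) - snd (emult a y))
     = emult a (fst x - fst y, snd x - snd y)"
  by (simp add: emult_def algebra_simps)

lemma emult_cancel:
  assumes "a \<noteq> ezero" and "emult a x = emult a y"
  shows "x = y"
proof -
  define d where "d = (fst x - fst y, snd x - snd y)"
  have "emult a d = ezero"
    using assms(2) emult_diff[of a x y] by (simp add: d_def ezero_def)
  then have "enorm a * enorm d = 0"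
    unfolding enorm_mult[symmetric] by (simp add: enorm_def ezero_def)
  then have "d = ezero"
    using enorm_pos[OF assms(1)] enorm_pos[of d] by fastforce
  then show ?thesis by (simp add: d_def ezero_def prod_eq_iff)
qed

lemma econg_iff: "econg \<gamma> u v \<longleftrightarrow> (\<exists>k. (fst u - fst v, snd u - snd v) = emult \<gamma> k)"
  by (simp add: econg_def eadd_def eneg_def)

lemma econg_iff_eadd: "econg \<gamma> w v \<longleftrightarrow> (\<exists>k. w = eadd v (emult \<gamma> k))"
  unfolding econg_iff eadd_def by (auto simp: prod_eq_iff algebra_simps)

lemma econg_refl: "econg \<gamma> u u"
  unfolding econg_iff by (rule exI[of _ "(0, 0)"]) (simp add: emult_def)

lemma econg_sym:
  assumes "econg \<gamma> u v"
  shows "econg \<gamma> v u"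
proof -
  obtain k where "(fst u - fst v, snd u - snd v) = emult \<gamma> k"
    using assms econg_iff by blast
  then show ?thesis unfolding econg_iff
    by (intro exI[of _ "(- fst k, - snd k)"]) (auto simp: emult_def prod_eq_iff algebra_simps)
qed

lemma econg_trans:
  assumes "econg \<gamma> u v" and "econg \<gamma> v w"
  shows "econg \<gamma> u w"
proof -
  obtain k where k: "(fst u - fst v, snd u - snd v) = emult \<gamma> k"
    using assms(1) econg_iff by blast
  obtain l where l: "(fst v - fst w, snd v - snd w) = emult \<gamma> l"
    using assms(2) econg_iff by blast
  show ?thesis unfolding econg_iff
    by (rule exI[of _ "(fst k + fst l, snd k + snd l)"])
       (use k l in \<open>auto simp: emult_def prod_eq_iff algebra_simps\<close>)
qed

lemma econg_eadd_left_iff: "econg \<gamma> (eadd v x) (eadd v y) \<longleftrightarrow> econg \<gamma> x y"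
  by (simp add: econg_iff eadd_def)

lemma econg_eadd_right: "econg \<gamma> u v \<Longrightarrow> econg \<gamma> (eadd u s) (eadd v s)"
  by (simp add: econg_iff eadd_def)

lemma econg_emult_right: "econg (emult \<alpha> \<beta>) u v \<Longrightarrow> econg \<alpha> u v"
  unfolding econg_iff by (metis emult_assoc)

lemma econg_emult_left_iff:
  assumes "\<alpha> \<noteq> ezero"
  shows "econg (emult \<alpha> \<beta>) (emult \<alpha> x) (emult \<alpha> y) \<longleftrightarrow> econg \<beta> x y"
  unfolding econg_iff emult_diff emult_assoc
  using emult_cancel[OF assms] by metis

lemma equiv_erel: "equiv UNIV (erel \<gamma>)"
  unfolding equiv_def refl_on_def sym_def trans_def erel_def
  using econg_refl econg_sym econg_trans by blast

lemma eclass_eq_iff: "eclass \<gamma> u = eclass \<gamma> v \<longleftrightarrow> econg \<gamma> u v"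
  unfolding eclass_def using equiv_class_eq_iff[OF equiv_erel, of u v \<gamma>] by (simp add: erel_def)

lemma mem_eclass: "x \<in> eclass \<gamma> u \<longleftrightarrow> econg \<gamma> u x"
  by (simp add: eclass_def erel_def)

lemma eresidues_eq: "eresidues \<gamma> = range (eclass \<gamma>)"
  by (auto simp: eresidues_def quotient_def eclass_def)

text \<open>For \<open>\<gamma> = (a, b)\<close>, the ideal \<open>(\<gamma>)\<close> is the lattice spanned by \<open>\<gamma>\<close> and \<open>\<gamma>\<rho> = (-b, a + b)\<close>;
  its first coordinates are the multiples of \<open>g = gcd a b\<close>, and a unimodular change of basis via
  Bezout coefficients gives the triangular basis \<open>(g, t), (0, m)\<close>.\<close>

lemma econg_triangular_basis:
  assumes "\<gamma> \<noteq> ezero"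
  obtains g m t where "g > 0" "m > 0" "g * m = enorm \<gamma>"
    and "\<And>z w. econg \<gamma> z w \<longleftrightarrow> (\<exists>i j. fst z - fst w = i * g \<and> snd z - snd w = i * t + j * m)"
proof -
  obtain a b where \<gamma>: "\<gamma> = (a, b)" by (cases \<gamma>)
  define g where "g = gcd a b"
  have ab: "a \<noteq> 0 \<or> b \<noteq> 0" using assms \<gamma> by (auto simp: ezero_def)
  then have "g > 0" by (simp add: g_def)
  obtain a' b' where a': "a = g * a'" and b': "b = g * b'"
    unfolding g_def by (meson gcd_dvd1 gcd_dvd2 dvdE)
  obtain p q where "p * a - q * b = g"
    using bezout_int[of a b] unfolding g_def by (metis diff_minus_eq_add mult_minus_left)
  then have "g * (p * a' - q * b') = g * 1"
    using a' b' by (simp add: algebra_simps)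
  then have det: "p * a' - q * b' = 1"
    using \<open>g > 0\<close> by simp
  define c where "c = a'^2 + a' * b' + b'^2"
  have "c > 0"
    using ab a' b' enorm_pos[of "(a', b')"] by (auto simp: c_def enorm_def ezero_def)
  define m where "m = g * c"
  define t where "t = p * b + q * (a + b)"
  have "econg \<gamma> z w \<longleftrightarrow> (\<exists>i j. fst z - fst w = i * g \<and> snd z - snd w = i * t + j * m)" for z w
  proof
    assume "econg \<gamma> z w"
    then obtain x y where k: "(fst z - fst w, snd z - snd w) = emult \<gamma> (x, y)"
      using econg_iff by (metis surj_pair)
    show "\<exists>i j. fst z - fst w = i * g \<and> snd z - snd w = i * t + j * m"
    proof (intro exI conjI)
      show "fst z - fst w = (a' * x - b' * y) * g"
        using k \<gamma> a' b' by (simp add: emult_def prod_eq_iff algebra_simps)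
      have "snd z - snd w = a * y + b * x + b * y"
        using k \<gamma> by (simp add: emult_def prod_eq_iff)
      also have "\<dots> = (a' * x - b' * y) * t + (p * y - q * x) * m"
        unfolding t_def m_def c_def a' b' using det by algebra
      finally show "snd z - snd w = (a' * x - b' * y) * t + (p * y - q * x) * m" .
    qed
  next
    assume "\<exists>i j. fst z - fst w = i * g \<and> snd z - snd w = i * t + j * m"
    then obtain i j where ij: "fst z - fst w = i * g" "snd z - snd w = i * t + j * m"
      by blast
    have "(fst z - fst w, snd z - snd w) = emult \<gamma> (i * p + j * b', i * q + j * a')"
      using ij det unfolding \<gamma> emult_def t_def m_def c_def a' b' prod_eq_iff fst_conv snd_conv
      by (intro conjI; algebra)
    then show "econg \<gamma> z w" using econg_iff by blast
  qed
  moreover have "g * m = enorm \<gamma>"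
    by (simp add: \<gamma> a' b' m_def c_def enorm_def power2_eq_square algebra_simps)
  ultimately show thesis
    using \<open>g > 0\<close> \<open>c > 0\<close> by (intro that[of g m t]) (simp_all add: m_def)
qed

definition residue_system :: "eis \<Rightarrow> eis set \<Rightarrow> bool" where
  "residue_system \<gamma> B \<longleftrightarrow>
     (\<forall>z. \<exists>r\<in>B. econg \<gamma> z r) \<and> (\<forall>r\<in>B. \<forall>r'\<in>B. econg \<gamma> r r' \<longrightarrow> r = r')"

lemma eq_if_dvd_diff_bounded:
  fixes x y g :: int
  assumes "0 \<le> x" "x < g" "0 \<le> y" "y < g" "g dvd x - y"
  shows "x = y"
  using dvd_imp_le_int[OF _ assms(5)] assms(1-4) by fastforce

lemma residue_system_exists:
  assumes "\<gamma> \<noteq> ezero"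
  obtains B where "finite B" "card B = nat (enorm \<gamma>)" "residue_system \<gamma> B"
proof -
  obtain g m t where pos: "g > 0" "m > 0" and gm: "g * m = enorm \<gamma>"
    and basis: "\<And>z w. econg \<gamma> z w \<longleftrightarrow>
                   (\<exists>i j. fst z - fst w = i * g \<and> snd z - snd w = i * t + j * m)"
    using econg_triangular_basis[OF assms] by blast
  define B where "B = {0..<g} \<times> {0..<m}"
  have "finite B" by (simp add: B_def)
  moreover have "card B = nat (enorm \<gamma>)"
    using gm pos by (simp add: B_def card_cartesian_product nat_mult_distrib[symmetric])
  moreover have "\<exists>r\<in>B. econg \<gamma> z r" for z
  proof
    define i where "i = fst z div g"
    define j where "j = (snd z - i * t) div m"
    show "(fst z mod g, (snd z - i * t) mod m) \<in> B"
      using pos by (simp add: B_def)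
    show "econg \<gamma> z (fst z mod g, (snd z - i * t) mod m)"
      unfolding basis
    proof (intro exI conjI)
      show "fst z - fst (fst z mod g, (snd z - i * t) mod m) = i * g"
        by (simp add: i_def minus_mod_eq_div_mult)
      show "snd z - snd (fst z mod g, (snd z - i * t) mod m) = i * t + j * m"
        using mod_div_mult_eq[of "snd z - i * t" m] unfolding j_def snd_conv by linarith
    qed
  qed
  moreover have "r = r'" if rB: "r \<in> B" "r' \<in> B" and "econg \<gamma> r r'" for r r'
  proof -
    obtain i j where ij: "fst r - fst r' = i * g" "snd r - snd r' = i * t + j * m"
      using \<open>econg \<gamma> r r'\<close> basis by blast
    have "fst r = fst r'"
      using rB ij(1) by (intro eq_if_dvd_diff_bounded[where g = g]) (auto simp: B_def)
    then have "i = 0" using ij(1) pos by simp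
    then have "snd r = snd r'"
      using rB ij(2) by (intro eq_if_dvd_diff_bounded[where g = m]) (auto simp: B_def)
    with \<open>fst r = fst r'\<close> show "r = r'" by (simp add: prod_eq_iff)
  qed
  ultimately show thesis
    using that unfolding residue_system_def by blast
qed

lemma EJ_conn_incongruent:
  assumes "s \<in> EJ_conn" "s' \<in> EJ_conn" "econg \<delta> s s'" "enorm \<delta> \<ge> 7"
  shows "s = s'"
proof (rule ccontr)
  assume "s \<noteq> s'"
  obtain k where k: "(fst s - fst s', snd s - snd s') = emult \<delta> k"
    using assms(3) econg_iff by blast
  with \<open>s \<noteq> s'\<close> have "k \<noteq> ezero"
    by (auto simp: ezero_def emult_def prod_eq_iff)
  then have "enorm (fst s - fst s', snd s - snd s') \<ge> 7"
    using k assms(4) enorm_le_enorm_mult[of k \<delta>] by simp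
  moreover have "enorm (fst s - fst s', snd s - snd s') \<le> 4"
    using assms(1,2) by (auto simp: EJ_conn_def eone_def erho_def eneg_def emult_def enorm_def)
  ultimately show False by simp
qed

lemma EJ_neighbours_eclass:
  "{W \<in> eresidues \<gamma>. EJ_adj \<gamma> (eclass \<gamma> u) W} = (\<lambda>s. eclass \<gamma> (eadd u s)) ` EJ_conn"
proof -
  have "EJ_adj \<gamma> (eclass \<gamma> u) W \<longleftrightarrow> (\<exists>s\<in>EJ_conn. W = eclass \<gamma> (eadd u s))" for W
  proof
    assume "EJ_adj \<gamma> (eclass \<gamma> u) W"
    then obtain u' s where u': "u' \<in> eclass \<gamma> u" "s \<in> EJ_conn" "W = eclass \<gamma> (eadd u' s)"
      unfolding EJ_adj_def by blast
    then have "eclass \<gamma> (eadd u' s) = eclass \<gamma> (eadd u s)"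
      using eclass_eq_iff econg_eadd_right econg_sym mem_eclass by metis
    with u' show "\<exists>s\<in>EJ_conn. W = eclass \<gamma> (eadd u s)" by blast
  next
    assume "\<exists>s\<in>EJ_conn. W = eclass \<gamma> (eadd u s)"
    then show "EJ_adj \<gamma> (eclass \<gamma> u) W"
      unfolding EJ_adj_def eresidues_eq using mem_eclass econg_refl by blast
  qed
  then show ?thesis by (auto simp: eresidues_eq)
qed

definition eproj :: "eis \<Rightarrow> eis set \<Rightarrow> eis set" where
  "eproj \<alpha> C = erel \<alpha> `` C"

lemma eproj_eclass: "eproj \<alpha> (eclass (emult \<alpha> \<beta>) u) = eclass \<alpha> u"
proof
  show "eproj \<alpha> (eclass (emult \<alpha> \<beta>) u) \<subseteq> eclass \<alpha> u"
    unfolding eproj_def by (auto simp: erel_def mem_eclass) (meson econg_emult_right econg_trans)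
  show "eclass \<alpha> u \<subseteq> eproj \<alpha> (eclass (emult \<alpha> \<beta>) u)"
    unfolding eproj_def using econg_refl by (fastforce simp: erel_def mem_eclass)
qed

lemma is_cover_map_eproj:
  assumes "enorm \<alpha> \<ge> 7"
  shows "is_cover_map (eresidues (emult \<alpha> \<beta>)) (EJ_adj (emult \<alpha> \<beta>))
                      (eresidues \<alpha>) (EJ_adj \<alpha>) (eproj \<alpha>)"
  unfolding is_cover_map_def
proof (intro conjI ballI)
  show "eproj \<alpha> ` eresidues (emult \<alpha> \<beta>) = eresidues \<alpha>"
    by (simp add: eresidues_eq image_image eproj_eclass)
next
  fix U assume "U \<in> eresidues (emult \<alpha> \<beta>)"
  then obtain u where U: "U = eclass (emult \<alpha> \<beta>) u" by (auto simp: eresidues_eq)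
  have "inj_on (\<lambda>s. eclass \<alpha> (eadd u s)) EJ_conn"
  proof (rule inj_onI)
    fix s s' assume "s \<in> EJ_conn" "s' \<in> EJ_conn" "eclass \<alpha> (eadd u s) = eclass \<alpha> (eadd u s')"
    then show "s = s'"
      using EJ_conn_incongruent[OF _ _ _ assms] by (simp add: eclass_eq_iff econg_eadd_left_iff)
  qed
  then show "bij_betw (eproj \<alpha>) {W \<in> eresidues (emult \<alpha> \<beta>). EJ_adj (emult \<alpha> \<beta>) U W}
                                 {W \<in> eresidues \<alpha>. EJ_adj \<alpha> (eproj \<alpha> U) W}"
    unfolding U eproj_eclass EJ_neighbours_eclass
    by (auto simp: bij_betw_def inj_on_def image_image eproj_eclass)
qed

lemma bij_betw_residue_system_eproj_fibre:
  assumes "\<alpha> \<noteq> ezero" and B: "residue_system \<beta> B"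
  shows "bij_betw (\<lambda>r. eclass (emult \<alpha> \<beta>) (eadd v (emult \<alpha> r))) B
                  {C \<in> eresidues (emult \<alpha> \<beta>). eproj \<alpha> C = eclass \<alpha> v}"
proof -
  let ?f = "\<lambda>r. eclass (emult \<alpha> \<beta>) (eadd v (emult \<alpha> r))"
  have f_eq_iff: "?f r = ?f r' \<longleftrightarrow> econg \<beta> r r'" for r r'
    unfolding eclass_eq_iff econg_eadd_left_iff econg_emult_left_iff[OF assms(1)] ..
  have "inj_on ?f B"
    using B f_eq_iff unfolding residue_system_def by (intro inj_onI) blast
  moreover have "?f ` B = {C \<in> eresidues (emult \<alpha> \<beta>). eproj \<alpha> C = eclass \<alpha> v}"
  proof (intro equalityI subsetI)
    fix C assume "C \<in> ?f ` B"
    then obtain r where "C = ?f r" by blast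
    moreover have "econg \<alpha> (eadd v (emult \<alpha> r)) v"
      unfolding econg_iff_eadd by blast
    ultimately show "C \<in> {C \<in> eresidues (emult \<alpha> \<beta>). eproj \<alpha> C = eclass \<alpha> v}"
      by (auto simp: eresidues_eq eproj_eclass eclass_eq_iff)
  next
    fix C assume C_fibre: "C \<in> {C \<in> eresidues (emult \<alpha> \<beta>). eproj \<alpha> C = eclass \<alpha> v}"
    then obtain w where C: "C = eclass (emult \<alpha> \<beta>) w"
      by (auto simp: eresidues_eq)
    with C_fibre have "econg \<alpha> w v"
      by (simp add: eproj_eclass eclass_eq_iff)
    then obtain k where w: "w = eadd v (emult \<alpha> k)"
      unfolding econg_iff_eadd by blast
    obtain r where "r \<in> B" "econg \<beta> k r"
      using B unfolding residue_system_def by blast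
    then have "C = ?f r"
      unfolding C w using f_eq_iff[of k r] by simp
    with \<open>r \<in> B\<close> show "C \<in> ?f ` B" by blast
  qed
  ultimately show ?thesis by (simp add: bij_betw_def)
qed

theorem theorem4p1:
  fixes \<alpha> \<beta> :: eis
  assumes "\<alpha> \<noteq> ezero" and "\<beta> \<noteq> ezero" and "enorm \<alpha> \<ge> 7"
  shows "is_kfold_cover (eresidues (emult \<alpha> \<beta>)) (EJ_adj (emult \<alpha> \<beta>))
                        (eresidues \<alpha>) (EJ_adj \<alpha>) (nat (enorm \<beta>))"
proof -
  obtain B where "card B = nat (enorm \<beta>)" and B: "residue_system \<beta> B"
    using residue_system_exists[OF assms(2)] by blast
  then have "card {C \<in> eresidues (emult \<alpha> \<beta>). eproj \<alpha> C = eclass \<alpha> v} = nat (enorm \<beta>)" for v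
    using bij_betw_same_card[OF bij_betw_residue_system_eproj_fibre[OF assms(1) B]] by simp
  then have "\<forall>V\<in>eresidues \<alpha>. card {C \<in> eresidues (emult \<alpha> \<beta>). eproj \<alpha> C = V} = nat (enorm \<beta>)"
    by (auto simp: eresidues_eq)
  then show ?thesis
    unfolding is_kfold_cover_def using is_cover_map_eproj[OF assms(3)] by blast
qed

end
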